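(* Let $G$ be a group with identity $e$, $A$ a set with at least two elements, and $\tau: A^G\to A^G$ a lazy cellular automaton with unique active transition $p \in A^S$ and writing symbol $a \in A$. Let $i,j \in\mathbb{N}$ with $i\leq j$. Then: \begin{enumerate} \item $\mathrm{supp}_a(\tau^i(x))\subseteq \mathrm{supp}_a(\tau^{j}(x))$ for all $x \in A^G$; \item $\mathrm{supp}_b(\tau^{i}(x))\supseteq \mathrm{supp}_b(\tau^{j}(x))$ for all $x \in A^G$ and all $b\in A\setminus\{a\}$; \item if $\mathrm{supp}_a(x) = \mathrm{supp}_a(\tau(x))$ for some $x \in A^G$, then $x= \tau(x)$. \end{enumerate}
   Context: $A^G$ is the set of maps $G \to A$ with shift action $(g\cdot x)(h) := x(hg)$. A cellular automaton is a map $\tau : A^G \to A^G$ with a finite $S \subseteq G$ and $\mu : A^S \to A$ such that $\tau(x)(g) = \mu((g\cdot x)|_S)$. $\tau$ is lazy with unique active transition $p \in A^S$ if there is such a local defining map $\mu : A^S \to A$ with $e \in S$ such that for all $z \in A^S$: $\mu(z) = z(e)$ iff $z \neq p$; its writing symbol is $a := \mu(p) \neq p(e)$. For $x \in A^G$ and $b \in A$, $\mathrm{supp}_b(x) := \{g \in G : x(g) = b\}$. $\tau^n$ is the $n$-fold composition, $\tau^0$ the identity, $\mathbb{N} = \{0,1,2,\dots\}$. *)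

theory Defs
  imports "HOL-Library.FuncSet"
begin

text \<open>The group G is a type of class group_add (written additively; identity 0,
  the group law need not be commutative). Configurations A^G are functions 'g => 'a.\<close>

definition shift :: "'g::group_add \<Rightarrow> ('g \<Rightarrow> 'a) \<Rightarrow> ('g \<Rightarrow> 'a)" where
  "shift g x = (\<lambda>h. x (h + g))"

text \<open>Patterns in A^S are extensional functions in S ->E UNIV; the restriction of a
  configuration to S is FuncSet's restrict.\<close>

definition local_defining_map ::
  "(('g::group_add \<Rightarrow> 'a) \<Rightarrow> ('g \<Rightarrow> 'a)) \<Rightarrow> 'g set \<Rightarrow> (('g \<Rightarrow> 'a) \<Rightarrow> 'a) \<Rightarrow> bool" where
  "local_defining_map \<tau> S \<mu> \<longleftrightarrow> finite S \<and> (\<forall>x g. \<tau> x g = \<mu> (restrict (shift g x) S))"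

definition cellular_automaton :: "(('g::group_add \<Rightarrow> 'a) \<Rightarrow> ('g \<Rightarrow> 'a)) \<Rightarrow> bool" where
  "cellular_automaton \<tau> \<longleftrightarrow> (\<exists>S \<mu>. local_defining_map \<tau> S \<mu>)"

definition lazy_uat ::
  "(('g::group_add \<Rightarrow> 'a) \<Rightarrow> ('g \<Rightarrow> 'a)) \<Rightarrow> 'g set \<Rightarrow> (('g \<Rightarrow> 'a) \<Rightarrow> 'a) \<Rightarrow> ('g \<Rightarrow> 'a) \<Rightarrow> bool" where
  "lazy_uat \<tau> S \<mu> p \<longleftrightarrow> local_defining_map \<tau> S \<mu> \<and> 0 \<in> S \<and> p \<in> S \<rightarrow>\<^sub>E UNIV \<and>
     (\<forall>z \<in> S \<rightarrow>\<^sub>E UNIV. (\<mu> z = z 0 \<longleftrightarrow> z \<noteq> p))"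

definition supp :: "'a \<Rightarrow> ('g \<Rightarrow> 'a) \<Rightarrow> 'g set" where
  "supp b x = {g. x g = b}"

end

theory Submission
  imports Defs
begin

text \<open>A lazy automaton with unique active transition p changes a cell only by writing
  a = \<mu> p into it. Hence the a-cells persist, cells carrying another symbol can only
  disappear, and a step that creates no new a-cell changes nothing. Everything below
  except the first lemma holds for any map \<tau> with this property.\<close>

lemma lazy_uat_cell_unchanged_or_written:
  assumes "lazy_uat \<tau> S \<mu> p"
  shows "\<tau> x g = x g \<or> \<tau> x g = \<mu> p"
proof -
  let ?z = "restrict (shift g x) S"
  have "\<tau> x g = \<mu> ?z" and "?z 0 = x g"
    using assms by (auto simp: lazy_uat_def local_defining_map_def shift_def)
  moreover have "\<mu> ?z = ?z 0" if "?z \<noteq> p"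
  proof -
    have "?z \<in> S \<rightarrow>\<^sub>E UNIV" by simp
    then show ?thesis using assms that unfolding lazy_uat_def by blast
  qed
  ultimately show ?thesis by metis
qed

context
  fixes \<tau> :: "('g \<Rightarrow> 'a) \<Rightarrow> ('g \<Rightarrow> 'a)" and a :: 'a
  assumes unchanged_or_written: "\<And>x g. \<tau> x g = x g \<or> \<tau> x g = a"
begin

lemma supp_written_subset: "supp a x \<subseteq> supp a (\<tau> x)"
  using unchanged_or_written[of x] by (auto simp: supp_def)

lemma supp_not_written_subset: "b \<noteq> a \<Longrightarrow> supp b (\<tau> x) \<subseteq> supp b x"
  using unchanged_or_written[of x] by (force simp: supp_def)

lemma supp_written_funpow_mono:
  assumes "i \<le> j"
  shows "supp a ((\<tau> ^^ i) x) \<subseteq> supp a ((\<tau> ^^ j) x)"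
  using assms
proof (induction j rule: dec_induct)
  case (step n)
  then show ?case using supp_written_subset[of "(\<tau> ^^ n) x"] by auto
qed simp

lemma supp_not_written_funpow_antimono:
  assumes "i \<le> j" and "b \<noteq> a"
  shows "supp b ((\<tau> ^^ j) x) \<subseteq> supp b ((\<tau> ^^ i) x)"
  using assms(1)
proof (induction j rule: dec_induct)
  case (step n)
  then show ?case using supp_not_written_subset[OF assms(2), of "(\<tau> ^^ n) x"] by auto
qed simp

lemma fixed_if_supp_written_eq:
  assumes "supp a x = supp a (\<tau> x)"
  shows "x = \<tau> x"
proof
  fix g
  have "x g = a \<longleftrightarrow> \<tau> x g = a"
    using assms by (auto simp: supp_def)
  then show "x g = \<tau> x g"
    using unchanged_or_written[of x g] by auto
qed

end

theorem lemma3: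
  fixes \<tau> :: "('g::group_add \<Rightarrow> 'a) \<Rightarrow> ('g \<Rightarrow> 'a)"
    and S :: "'g set" and \<mu> :: "('g \<Rightarrow> 'a) \<Rightarrow> 'a" and p :: "'g \<Rightarrow> 'a"
    and a :: 'a and i j :: nat
  assumes two: "\<exists>c d :: 'a. c \<noteq> d"
    and lazy: "lazy_uat \<tau> S \<mu> p"
    and wr: "a = \<mu> p"
    and ij: "i \<le> j"
  shows "(\<forall>x. supp a ((\<tau> ^^ i) x) \<subseteq> supp a ((\<tau> ^^ j) x))
       \<and> (\<forall>x b. b \<noteq> a \<longrightarrow> supp b ((\<tau> ^^ j) x) \<subseteq> supp b ((\<tau> ^^ i) x))
       \<and> (\<forall>x. supp a x = supp a (\<tau> x) \<longrightarrow> x = \<tau> x)"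
proof -
  have step: "\<And>x g. \<tau> x g = x g \<or> \<tau> x g = a"
    using lazy_uat_cell_unchanged_or_written[OF lazy] wr by blast
  show ?thesis
    using supp_written_funpow_mono[of \<tau> a, OF step ij]
      supp_not_written_funpow_antimono[of \<tau> a, OF step ij]
      fixed_if_supp_written_eq[of \<tau> a, OF step] by blast
qed

end
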